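(* Let $s,t,z$ be positive integers and let $N_{\text{AGE}}$ be the quantity defined in the context. Then $N_{\text{AGE}}\le N_{\text{Ent}}$, $N_{\text{AGE}}\le N_{\text{SSMM}}$, $N_{\text{AGE}}\le N_{\text{GCSA-NA}}$, and, whenever $s,t$ are not both $1$, $N_{\text{AGE}}\le N_{\text{PolyDot}}$, where these are defined in the context.
   Context: $N_{\text{AGE}}=2s+2z-1$ if $t=1$, and for $t\ge2$, $N_{\text{AGE}}=\min_{\lambda\in\{0,\dots,z\}}\Gamma(\lambda)$ with $\theta=ts+\lambda$, $q=\min\{\lfloor\frac{z-1}{\lambda}\rfloor,t-1\}$ ($q=t-1$ when $\lambda=0$), and $\Gamma(\lambda)=2st^2+2z-1$ if $z>ts-s,\lambda=0$; $st^2+3st-2s+t(z-1)+1$ if $z\le ts-s,\lambda=0$; $2ts+(ts+z)(t-1)+2z-1$ if $\lambda=z$; $(q+2)ts+\theta(t-1)+2z-1$ if $z>ts,0<\lambda<z$; $3ts+\theta(t-1)+2z-1$ if $z\le ts,0<\lambda<z,ts<\lambda+s-1$; $2ts+\theta(t-1)+(q+2)z-q-1$ if $\lambda+s-1<z\le ts,0<\lambda<z,q\lambda\ge s$; $\theta(t+1)+q(z-1)-2\lambda+z+ts+\min\{0,z+s(1-t)-\lambda q-1\}$ if $\lambda+s-1<z\le ts,0<\lambda<z,q\lambda<s$; $2ts+\theta(t-1)+3z+(\lambda+s-1)q-\lambda-s-1$ if $z\le\lambda+s-1\le ts,0<\lambda<z,q\lambda\ge s$; $\theta(t+1)+q(s-1)-3\lambda+3z-1+\min\{0,ts-z+1+\lambda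 q-s\}$ if $z\le\lambda+s-1\le ts,0<\lambda<z,q\lambda<s$. (This is the number of workers of AGE-CMPC.) Baselines: $N_{\text{Ent}}=2st^2+2z-1$ if $z>ts-s$ and $st^2+3st-2s+tz-t+1$ if $z\le ts-s$ (Entangled-CMPC); $N_{\text{SSMM}}=(t+1)(ts+z)-1$; $N_{\text{GCSA-NA}}=2st^2+2z-1$ (single product). With $\theta'=2ts-t$, $p=\min\{\lfloor\frac{z-1}{\theta'-ts}\rfloor,t-1\}$ ($p=t-1$ when $s=1$), $\upsilon'=\max\{ts-2t-s+2,\frac{ts-2t+1}{2}\}$: $N_{\text{PolyDot}}=(p+2)ts+\theta'(t-1)+2z-1$ if $ts<z$ or $t=1$; $2ts+\theta'(t-1)+3z-1$ if $ts-t<z\le ts,s,t\ne1$; $2ts+\theta'(t-1)+2z-1$ if $ts-2t<z\le ts-t,s,t\ne1$; $(t+1)ts+(t-1)(z+t-1)+2z-1$ if $\upsilon'<z\le ts-2t,s,t\ne1$; $\theta't+z$ if $z\le\upsilon',s,t\ne1$; $t^2+2t+tz-1$ if $s=1,t\ge z,t\ne1$. *)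

theory Defs
  imports Complex_Main
begin

definition age_q :: "int \<Rightarrow> int \<Rightarrow> int \<Rightarrow> int" where
  "age_q t z l = (if l = 0 then t - 1 else min ((z - 1) div l) (t - 1))"

definition age_Gamma :: "int \<Rightarrow> int \<Rightarrow> int \<Rightarrow> int \<Rightarrow> int" where
  "age_Gamma s t z l =
    (let \<theta> = t*s + l; q = age_q t z l in
     if l = 0 then
       (if z > t*s - s then 2*s*t^2 + 2*z - 1
        else s*t^2 + 3*s*t - 2*s + t*(z - 1) + 1)
     else if l = z then 2*t*s + (t*s + z)*(t - 1) + 2*z - 1
     else if z > t*s then (q + 2)*t*s + \<theta>*(t - 1) + 2*z - 1
     else if t*s < l + s - 1 then 3*t*s + \<theta>*(t - 1) + 2*z - 1
     else if l + s - 1 < z then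
       (if q*l \<ge> s then 2*t*s + \<theta>*(t - 1) + (q + 2)*z - q - 1
        else \<theta>*(t + 1) + q*(z - 1) - 2*l + z + t*s + min 0 (z + s*(1 - t) - l*q - 1))
     else
       (if q*l \<ge> s then 2*t*s + \<theta>*(t - 1) + 3*z + (l + s - 1)*q - l - s - 1
        else \<theta>*(t + 1) + q*(s - 1) - 3*l + 3*z - 1 + min 0 (t*s - z + 1 + l*q - s)))"

definition N_AGE :: "int \<Rightarrow> int \<Rightarrow> int \<Rightarrow> int" where
  "N_AGE s t z = (if t = 1 then 2*s + 2*z - 1
                  else Min ((\<lambda>l. age_Gamma s t z l) ` {0..z}))"

definition N_Ent :: "int \<Rightarrow> int \<Rightarrow> int \<Rightarrow> int" where
  "N_Ent s t z = (if z > t*s - s then 2*s*t^2 + 2*z - 1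
                  else s*t^2 + 3*s*t - 2*s + t*z - t + 1)"

definition N_SSMM :: "int \<Rightarrow> int \<Rightarrow> int \<Rightarrow> int" where
  "N_SSMM s t z = (t + 1)*(t*s + z) - 1"

definition N_GCSA_NA :: "int \<Rightarrow> int \<Rightarrow> int \<Rightarrow> int" where
  "N_GCSA_NA s t z = 2*s*t^2 + 2*z - 1"

definition polydot_p :: "int \<Rightarrow> int \<Rightarrow> int \<Rightarrow> int" where
  "polydot_p s t z = (if s = 1 then t - 1
                      else min ((z - 1) div ((2*t*s - t) - t*s)) (t - 1))"

definition polydot_upsilon :: "int \<Rightarrow> int \<Rightarrow> real" where
  "polydot_upsilon s t = max (of_int (t*s - 2*t - s + 2)) (of_int (t*s - 2*t + 1) / 2)"

definition N_PolyDot :: "int \<Rightarrow> int \<Rightarrow> int \<Rightarrow> int" where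
  "N_PolyDot s t z =
    (let \<theta>' = 2*t*s - t; p = polydot_p s t z in
     if t*s < z \<or> t = 1 then (p + 2)*t*s + \<theta>'*(t - 1) + 2*z - 1
     else if s \<noteq> 1 \<and> t*s - t < z \<and> z \<le> t*s then 2*t*s + \<theta>'*(t - 1) + 3*z - 1
     else if s \<noteq> 1 \<and> t*s - 2*t < z \<and> z \<le> t*s - t then 2*t*s + \<theta>'*(t - 1) + 2*z - 1
     else if s \<noteq> 1 \<and> polydot_upsilon s t < of_int z \<and> z \<le> t*s - 2*t
       then (t + 1)*t*s + (t - 1)*(z + t - 1) + 2*z - 1
     else if s \<noteq> 1 \<and> of_int z \<le> polydot_upsilon s t then \<theta>'*t + z
     else t^2 + 2*t + t*z - 1)"

end

(*
  For t \<ge> 2, N_AGE is the minimum of \<Gamma>(\<lambda>) over 0 \<le> \<lambda> \<le> z, so every admissible gap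
  \<lambda> bounds it from above.  The end points \<lambda> = 0 and \<lambda> = z reproduce Entangled-CMPC
  and SSMM exactly.  PolyDot is AGE-CMPC with the gap \<lambda> = \<theta>' - ts = ts - t: for z > ts
  this gap gives exactly N_PolyDot, and for ts - t < z \<le> ts with t > s + 1 it gives
  N_PolyDot - 1.  In every remaining regime SSMM is already no worse than PolyDot.
*)
theory Submission
  imports Defs
begin

lemma N_AGE_le_age_Gamma:
  assumes "t \<noteq> 1" "0 \<le> l" "l \<le> z"
  shows "N_AGE s t z \<le> age_Gamma s t z l"
  using assms unfolding N_AGE_def by (simp add: Min_le)

lemma age_Gamma_0_eq_N_Ent: "t \<noteq> 1 \<Longrightarrow> age_Gamma s t z 0 = N_Ent s t z"
  unfolding age_Gamma_def N_Ent_def Let_def by (simp add: algebra_simps)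

lemma age_Gamma_self_eq_N_SSMM: "z \<noteq> 0 \<Longrightarrow> age_Gamma s t z z = N_SSMM s t z"
  unfolding age_Gamma_def N_SSMM_def Let_def by (simp add: algebra_simps)

lemma N_AGE_t1: "N_AGE s 1 z = 2*s + 2*z - 1"
  unfolding N_AGE_def by simp

lemma N_AGE_le_N_Ent:
  assumes "s \<ge> 1" "z \<ge> 1"
  shows "N_AGE s t z \<le> N_Ent s t z"
proof (cases "t = 1")
  case True
  then show ?thesis using assms by (simp add: N_AGE_t1 N_Ent_def)
next
  case False
  then show ?thesis
    using N_AGE_le_age_Gamma[of t 0 z] assms by (simp add: age_Gamma_0_eq_N_Ent)
qed

lemma N_AGE_le_N_SSMM:
  assumes "z \<ge> 1"
  shows "N_AGE s t z \<le> N_SSMM s t z"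
proof (cases "t = 1")
  case True
  then show ?thesis by (simp add: N_AGE_t1 N_SSMM_def)
next
  case False
  then show ?thesis
    using N_AGE_le_age_Gamma[of t z z] assms by (simp add: age_Gamma_self_eq_N_SSMM)
qed

lemma N_Ent_le_N_GCSA_NA:
  assumes "s \<ge> 1" "t \<ge> 1" "z \<ge> 1"
  shows "N_Ent s t z \<le> N_GCSA_NA s t z"
proof (cases "z > t*s - s")
  case True
  then show ?thesis unfolding N_Ent_def N_GCSA_NA_def by simp
next
  case False
  then have "t \<noteq> 1" using assms(3) by auto
  then have "t \<ge> 2" using assms(2) by simp
  then have "(t - 2)*z \<le> (t - 2)*(s*(t - 1) + 1)"
    using False by (intro mult_left_mono) (auto simp: algebra_simps)
  then show ?thesis using False unfolding N_Ent_def N_GCSA_NA_def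
    by (simp add: algebra_simps power2_eq_square)
qed

lemma of_int_le_polydot_upsilon_iff:
  "of_int z \<le> polydot_upsilon s t \<longleftrightarrow> z \<le> t*s - 2*t - s + 2 \<or> 2*z \<le> t*s - 2*t + 1"
proof -
  have "(of_int z \<le> (of_int (t*s - 2*t + 1) / 2 :: real)) \<longleftrightarrow>
        (of_int (2*z) \<le> (of_int (t*s - 2*t + 1) :: real))"
    by (simp add: field_simps)
  then have "(of_int z \<le> (of_int (t*s - 2*t + 1) / 2 :: real)) \<longleftrightarrow> 2*z \<le> t*s - 2*t + 1"
    by (simp only: of_int_le_iff)
  then show ?thesis unfolding polydot_upsilon_def by (simp only: le_max_iff_disj of_int_le_iff)
qed

lemma N_PolyDot_t1:
  assumes "s \<ge> 2" "z \<ge> 1"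
  shows "N_PolyDot s 1 z = 2*s + 2*z - 1"
proof -
  have "(z - 1) div (s - 1) \<ge> 0" using assms by (simp add: pos_imp_zdiv_nonneg_iff)
  then have "polydot_p s 1 z = 0" unfolding polydot_p_def using assms by simp
  then show ?thesis unfolding N_PolyDot_def Let_def by simp
qed

lemma N_PolyDot_eq_N_Ent_s1:
  assumes "t < z"
  shows "N_PolyDot 1 t z = N_Ent 1 t z"
  using assms unfolding N_PolyDot_def polydot_p_def N_Ent_def Let_def
  by (simp add: algebra_simps power2_eq_square)

lemma N_SSMM_le_N_PolyDot_s1:
  assumes "t \<ge> 2" "z \<le> t"
  shows "N_SSMM 1 t z \<le> N_PolyDot 1 t z"
  using assms unfolding N_PolyDot_def N_SSMM_def Let_def
  by (simp add: algebra_simps power2_eq_square)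

lemma age_Gamma_eq_N_PolyDot_above_ts:
  assumes "s \<ge> 2" "t \<ge> 2" "t*s < z"
  shows "age_Gamma s t z (t*s - t) = N_PolyDot s t z"
proof -
  define l where "l = t*s - t"
  have "2*t \<le> t*s" using assms by simp
  then have "0 < l" "l < z" using assms l_def by linarith+
  moreover have "2*t*s - t - t*s = l" unfolding l_def by simp
  ultimately show ?thesis
    unfolding age_Gamma_def N_PolyDot_def polydot_p_def age_q_def Let_def
    using assms by (simp add: l_def algebra_simps)
qed

lemma N_PolyDot_near_ts:
  assumes "s \<ge> 2" "t \<ge> 2" "t*s - t < z" "z \<le> t*s"
  shows "N_PolyDot s t z = 2*t*s + (2*t*s - t)*(t - 1) + 3*z - 1"
  unfolding N_PolyDot_def Let_def using assms by simp

lemma age_Gamma_eq_N_PolyDot_near_ts: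
  assumes "s \<ge> 2" "s + 1 < t" "t*s - t < z" "z \<le> t*s"
  shows "age_Gamma s t z (t*s - t) = N_PolyDot s t z - 1"
proof -
  define l where "l = t*s - t"
  have "2*t \<le> t*s" using assms by simp
  then have l: "0 < l" "l < z" "z - 1 < 2*l" using assms l_def by linarith+
  then have "(z - 1) div l = 1" by (intro int_div_pos_eq[where r = "z - 1 - l"]) auto
  then have "age_q t z l = 1" unfolding age_q_def using assms l by simp
  moreover have "s \<le> l"
  proof -
    have "1*1 \<le> (t - 1)*(s - 1)" using assms by (intro mult_mono) auto
    then show ?thesis unfolding l_def by (simp add: algebra_simps)
  qed
  moreover have "\<not> t*s < l + s - 1" using assms unfolding l_def by simp
  ultimately have "age_Gamma s t z l = 2*t*s + (t*s + l)*(t - 1) + 3*z - 2"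
    unfolding age_Gamma_def Let_def using assms l by auto
  moreover have "N_PolyDot s t z = 2*t*s + (2*t*s - t)*(t - 1) + 3*z - 1"
    using N_PolyDot_near_ts assms by simp
  ultimately show ?thesis by (simp add: l_def algebra_simps)
qed

lemma N_SSMM_le_N_PolyDot_near_ts:
  assumes "s \<ge> 2" "t \<ge> 2" "t \<le> s + 1" "t*s - t < z" "z \<le> t*s"
  shows "N_SSMM s t z \<le> N_PolyDot s t z"
proof -
  have "(t - 2)*z \<le> (t - 2)*(t*s)" using assms by (intro mult_left_mono) auto
  moreover have "t*(t - 1) \<le> t*s" using assms by (intro mult_left_mono) auto
  moreover have "N_PolyDot s t z = 2*t*s + (2*t*s - t)*(t - 1) + 3*z - 1"
    using N_PolyDot_near_ts assms by simp
  ultimately show ?thesis unfolding N_SSMM_def by (simp add: algebra_simps)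
qed

lemma N_SSMM_le_N_PolyDot_below:
  assumes "s \<ge> 2" "t \<ge> 2" "z \<ge> 1" "z \<le> t*s - t"
  shows "N_SSMM s t z \<le> N_PolyDot s t z"
proof -
  have "t \<le> t*s" using assms by simp
  consider "t*s - 2*t < z"
    | "z \<le> t*s - 2*t" "of_int z \<le> polydot_upsilon s t"
    | "z \<le> t*s - 2*t" "\<not> of_int z \<le> polydot_upsilon s t"
    by linarith
  then show ?thesis
  proof cases
    case 1
    then have "N_PolyDot s t z = 2*t*s + (2*t*s - t)*(t - 1) + 2*z - 1"
      unfolding N_PolyDot_def Let_def using assms by simp
    moreover have "(t - 1)*z \<le> (t - 1)*(t*s - t)" using assms by (intro mult_left_mono) auto
    ultimately show ?thesis unfolding N_SSMM_def by (simp add: algebra_simps)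
  next
    case 2
    then have "N_PolyDot s t z = (2*t*s - t)*t + z"
      unfolding N_PolyDot_def Let_def using assms by auto
    moreover have "t*z \<le> t*t*s - t*t - t*s + 1"
    proof (cases "z \<le> t*s - 2*t - s + 2")
      case True
      then have "t*z \<le> t*(t*s - 2*t - s + 2)" using assms by (intro mult_left_mono) auto
      moreover have "(t - 1)*(t - 1) \<ge> 0" by simp
      ultimately show ?thesis by (simp add: algebra_simps)
    next
      case False
      then have half: "2*z \<le> t*s - 2*t + 1" using 2 of_int_le_polydot_upsilon_iff by blast
      with False assms have "t \<ge> 3" by (cases "t = 2") auto
      then have "(t*s)*(t - 3) \<ge> 0" using assms by simp
      moreover have "t*(2*z) \<le> t*(t*s - 2*t + 1)" using half assms by (intro mult_left_mono) auto
      ultimately show ?thesis using \<open>t \<le> t*s\<close> by (simp add: algebra_simps)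
    qed
    ultimately show ?thesis unfolding N_SSMM_def by (simp add: algebra_simps)
  next
    case 3
    then have "N_PolyDot s t z = (t + 1)*t*s + (t - 1)*(z + t - 1) + 2*z - 1"
      unfolding N_PolyDot_def Let_def using assms by auto
    moreover have "(t - 1)*(t - 1) \<ge> 0" by simp
    ultimately show ?thesis unfolding N_SSMM_def by (simp add: algebra_simps)
  qed
qed

lemma N_AGE_le_N_PolyDot:
  assumes "s \<ge> 1" "t \<ge> 2" "z \<ge> 1"
  shows "N_AGE s t z \<le> N_PolyDot s t z"
proof -
  have Gamma: "N_AGE s t z \<le> age_Gamma s t z l" if "0 \<le> l" "l \<le> z" for l
    using N_AGE_le_age_Gamma that assms(2) by simp
  have SSMM: "N_AGE s t z \<le> N_SSMM s t z" using N_AGE_le_N_SSMM assms(3) .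
  have "t \<le> t*s" using assms by simp
  consider "s = 1" "t*s < z" | "s = 1" "z \<le> t*s" | "s \<ge> 2" "t*s < z"
    | "s \<ge> 2" "t*s - t < z" "z \<le> t*s" "t \<le> s + 1"
    | "s \<ge> 2" "t*s - t < z" "z \<le> t*s" "s + 1 < t"
    | "s \<ge> 2" "z \<le> t*s - t"
    using assms by linarith
  then show ?thesis
  proof cases
    case 1
    then show ?thesis using N_AGE_le_N_Ent N_PolyDot_eq_N_Ent_s1 assms by simp
  next
    case 2
    then show ?thesis using SSMM N_SSMM_le_N_PolyDot_s1 assms by fastforce
  next
    case 3
    then show ?thesis
      using Gamma[of "t*s - t"] age_Gamma_eq_N_PolyDot_above_ts assms \<open>t \<le> t*s\<close> by simp
  next
    case 4
    then show ?thesis using SSMM N_SSMM_le_N_PolyDot_near_ts assms by fastforce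
  next
    case 5
    then show ?thesis
      using Gamma[of "t*s - t"] age_Gamma_eq_N_PolyDot_near_ts assms \<open>t \<le> t*s\<close> by simp
  next
    case 6
    then show ?thesis using SSMM N_SSMM_le_N_PolyDot_below assms by fastforce
  qed
qed

theorem lemma4:
  fixes s t z :: int
  assumes "s \<ge> 1" and "t \<ge> 1" and "z \<ge> 1"
  shows "N_AGE s t z \<le> N_Ent s t z \<and> N_AGE s t z \<le> N_SSMM s t z \<and>
         N_AGE s t z \<le> N_GCSA_NA s t z \<and>
         (\<not> (s = 1 \<and> t = 1) \<longrightarrow> N_AGE s t z \<le> N_PolyDot s t z)"
proof (intro conjI impI)
  show Ent: "N_AGE s t z \<le> N_Ent s t z" using N_AGE_le_N_Ent assms by simp
  show "N_AGE s t z \<le> N_SSMM s t z" using N_AGE_le_N_SSMM assms by simp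
  show "N_AGE s t z \<le> N_GCSA_NA s t z" using Ent N_Ent_le_N_GCSA_NA assms by fastforce
  assume "\<not> (s = 1 \<and> t = 1)"
  then consider "t = 1" "s \<ge> 2" | "t \<ge> 2" using assms by linarith
  then show "N_AGE s t z \<le> N_PolyDot s t z"
  proof cases
    case 1
    then show ?thesis using N_AGE_t1 N_PolyDot_t1 assms by simp
  next
    case 2
    then show ?thesis using N_AGE_le_N_PolyDot assms by simp
  qed
qed

end
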